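(* Let $S_1=(x_1,y_1),S_2=(x_2,y_2),S_3=(x_3,y_3),S_4=(x_4,y_4)$ be four points in the plane with $x_1\le x_2\le x_3\le x_4$, and let $\delta_1,\ldots,\delta_4$ be positive integers. For $i\in\{1,\dots,4\}$ define the pivot point $P_i=(\tilde x_i,\tilde y_i)$ by $$\tilde x_i=x_i+\frac{\sum_{j=1}^4\delta_j(x_j-x_i)^2}{\sum_{j=1}^4\delta_j(x_j-x_i)},\qquad \tilde y_i=y_i+\frac{\sum_{j=1}^4\delta_j(x_j-x_i)(y_j-y_i)}{\sum_{j=1}^4\delta_j(x_j-x_i)},$$ whenever the denominator is nonzero. Then: (a) whenever $P_2$ is defined, there are real numbers $\lambda_1,\lambda_3,\lambda_4$ with $\lambda_1+\lambda_3+\lambda_4=1$ and $P_2=\lambda_1S_1+\lambda_3S_3+\lambda_4S_4$ such that either ($\lambda_1\ge 0$, $\lambda_3\le 0$, $\lambda_4\le 0$) or ($\lambda_1\le 0$, $\lambda_3\ge 0$, $\lambda_4\ge 0$); i.e. $P_2$ lies in the regions of sign pattern $+--$ or $-++$ with respect to the triangle $S_1S_3S_4$; (b) whenever $P_3$ is defined, there are real numbers $\mu_1,\mu_2,\mu_4$ with $\mu_1+\mu_2+\mu_4=1$ and $P_3=\mu_1S_1+\mu_2S_2+\mu_4S_4$ such that either ($\mu_1\ge0$, $\mu_2\ge 0$, $\mu_4\le 0$) or ($\mu_1\le 0$, $\mu_2\le 0$, $\mu_4\ge 0$); i.e. $P_3$ lies in the regions of sign pattern $++-$ or $--+$ with respect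 to the triangle $S_1S_2S_4$.
   Context: The pivot point $P_i$ is the point through which the least-squares regression line of the data, in which each $S_j$ appears $\delta_j$ times, always passes regardless of how many additional copies of $S_i$ are added; it is undefined when $\sum_j\delta_j(x_j-x_i)=0$. For a triangle $ABC$, the barycentric coordinates of a point $Q$ are the reals $(\lambda_A,\lambda_B,\lambda_C)$ with sum $1$ and $Q=\lambda_AA+\lambda_BB+\lambda_CC$ (unique when $A,B,C$ are not collinear); the sign pattern of $(\lambda_A,\lambda_B,\lambda_C)$ (e.g. $+--$) determines which of the seven regions cut out by the three edge-lines contains $Q$. *)

theory Defs
  imports Complex_Main
begin

text \<open>Data points S_j = (x j, y j), j = 1..4, with multiplicities d j.
  Pivot point P_i = (pivot_x x d i, pivot_y x y d i), defined iff pivot_den x d i \<noteq> 0.\<close>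

definition pivot_den :: "(nat \<Rightarrow> real) \<Rightarrow> (nat \<Rightarrow> nat) \<Rightarrow> nat \<Rightarrow> real" where
  "pivot_den x d i = (\<Sum>j\<in>{1..4}. real (d j) * (x j - x i))"

definition pivot_x :: "(nat \<Rightarrow> real) \<Rightarrow> (nat \<Rightarrow> nat) \<Rightarrow> nat \<Rightarrow> real" where
  "pivot_x x d i = x i + (\<Sum>j\<in>{1..4}. real (d j) * (x j - x i)^2) / pivot_den x d i"

definition pivot_y :: "(nat \<Rightarrow> real) \<Rightarrow> (nat \<Rightarrow> real) \<Rightarrow> (nat \<Rightarrow> nat) \<Rightarrow> nat \<Rightarrow> real" where
  "pivot_y x y d i = y i + (\<Sum>j\<in>{1..4}. real (d j) * (x j - x i) * (y j - y i)) / pivot_den x d i"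

end

theory Submission
  imports Defs
begin

text \<open>Writing c_j = \<delta>_j (x_j - x_i), both coordinates of the pivot point have the form
  P_i = S_i + (\<Sum>_j c_j (S_j - S_i)) / (\<Sum>_j c_j), so P_i is the affine combination of the S_j
  with weights c_j / (\<Sum>_k c_k). The weight of S_i itself vanishes, and every other weight has
  the sign of x_j - x_i times the sign of the denominator. Ordering the x-coordinates therefore
  fixes the sign pattern up to a global sign change.\<close>

definition pivot_weight :: "(nat \<Rightarrow> real) \<Rightarrow> (nat \<Rightarrow> nat) \<Rightarrow> nat \<Rightarrow> nat \<Rightarrow> real" where
  "pivot_weight x d i j = real (d j) * (x j - x i) / pivot_den x d i"

lemma sum_atLeast1_atMost4: "(\<Sum>j\<in>{1..4::nat}. f j) = f 1 + f 2 + f 3 + f 4"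
proof -
  have "{1..4::nat} = {1, 2, 3, 4}" by auto
  then show ?thesis by (simp add: ac_simps)
qed

lemma affine_combination_eq:
  fixes c z :: "'a \<Rightarrow> 'b::field"
  assumes "sum c J \<noteq> 0"
  shows "a + (\<Sum>j\<in>J. c j * (z j - a)) / sum c J = (\<Sum>j\<in>J. c j / sum c J * z j)"
proof -
  have "(\<Sum>j\<in>J. c j * (z j - a)) = (\<Sum>j\<in>J. c j * z j) - sum c J * a"
    by (simp add: right_diff_distrib sum_subtractf sum_distrib_right)
  then have "a + (\<Sum>j\<in>J. c j * (z j - a)) / sum c J = (\<Sum>j\<in>J. c j * z j) / sum c J"
    using assms by (simp add: field_simps)
  then show ?thesis
    by (simp add: sum_divide_distrib)
qed

lemma pivot_x_eq_pivot_y: "pivot_x x d i = pivot_y x x d i"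
  by (simp add: pivot_x_def pivot_y_def power2_eq_square mult.assoc)

lemma pivot_weight_self [simp]: "pivot_weight x d i i = 0"
  by (simp add: pivot_weight_def)

lemma sum_pivot_weight:
  assumes "pivot_den x d i \<noteq> 0"
  shows "(\<Sum>j\<in>{1..4}. pivot_weight x d i j) = 1"
  using assms by (simp add: pivot_weight_def pivot_den_def flip: sum_divide_distrib)

lemma pivot_y_eq_weighted_sum:
  assumes "pivot_den x d i \<noteq> 0"
  shows "pivot_y x y d i = (\<Sum>j\<in>{1..4}. pivot_weight x d i j * y j)"
  using affine_combination_eq[where c = "\<lambda>j. real (d j) * (x j - x i)" and J = "{1..4}"
      and a = "y i" and z = y] assms
  by (simp add: pivot_y_def pivot_weight_def pivot_den_def mult.assoc)

lemma pivot_x_eq_weighted_sum: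
  assumes "pivot_den x d i \<noteq> 0"
  shows "pivot_x x d i = (\<Sum>j\<in>{1..4}. pivot_weight x d i j * x j)"
  using pivot_y_eq_weighted_sum[OF assms] by (simp add: pivot_x_eq_pivot_y)

text \<open>No case distinction on the denominator being zero is needed, since then all weights are 0.
  Only \<open>real (d j) \<ge> 0\<close> enters.\<close>

lemma pivot_weight_signs:
  "(\<forall>j. (x j \<le> x i \<longrightarrow> pivot_weight x d i j \<le> 0) \<and> (x i \<le> x j \<longrightarrow> pivot_weight x d i j \<ge> 0))
   \<or> (\<forall>j. (x j \<le> x i \<longrightarrow> pivot_weight x d i j \<ge> 0) \<and> (x i \<le> x j \<longrightarrow> pivot_weight x d i j \<le> 0))"
proof (cases "pivot_den x d i \<ge> 0")
  case True
  then show ?thesis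
    by (auto simp: pivot_weight_def intro!: divide_nonpos_nonneg divide_nonneg_nonneg
        mult_nonneg_nonpos)
next
  case False
  then show ?thesis
    by (auto simp: pivot_weight_def intro!: divide_nonpos_neg divide_nonneg_neg
        mult_nonneg_nonpos)
qed

lemma pivot_as_combination:
  assumes "pivot_den x d i \<noteq> 0"
  defines "w \<equiv> pivot_weight x d i"
  shows "w 1 + w 2 + w 3 + w 4 = 1"
    and "pivot_x x d i = w 1 * x 1 + w 2 * x 2 + w 3 * x 3 + w 4 * x 4"
    and "pivot_y x y d i = w 1 * y 1 + w 2 * y 2 + w 3 * y 3 + w 4 * y 4"
  using sum_pivot_weight[OF assms(1)] pivot_x_eq_weighted_sum[OF assms(1)]
    pivot_y_eq_weighted_sum[OF assms(1)]
  unfolding w_def sum_atLeast1_atMost4 by simp_all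

theorem proposition3:
  fixes x y :: "nat \<Rightarrow> real" and d :: "nat \<Rightarrow> nat"
  assumes "x 1 \<le> x 2" "x 2 \<le> x 3" "x 3 \<le> x 4"
    and "\<And>j. j \<in> {1..4} \<Longrightarrow> d j > 0"
  shows "(pivot_den x d 2 \<noteq> 0 \<longrightarrow>
           (\<exists>l1 l3 l4. l1 + l3 + l4 = 1
              \<and> pivot_x x d 2 = l1 * x 1 + l3 * x 3 + l4 * x 4
              \<and> pivot_y x y d 2 = l1 * y 1 + l3 * y 3 + l4 * y 4
              \<and> ((l1 \<ge> 0 \<and> l3 \<le> 0 \<and> l4 \<le> 0) \<or> (l1 \<le> 0 \<and> l3 \<ge> 0 \<and> l4 \<ge> 0))))
       \<and> (pivot_den x d 3 \<noteq> 0 \<longrightarrow>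
           (\<exists>m1 m2 m4. m1 + m2 + m4 = 1
              \<and> pivot_x x d 3 = m1 * x 1 + m2 * x 2 + m4 * x 4
              \<and> pivot_y x y d 3 = m1 * y 1 + m2 * y 2 + m4 * y 4
              \<and> ((m1 \<ge> 0 \<and> m2 \<ge> 0 \<and> m4 \<le> 0) \<or> (m1 \<le> 0 \<and> m2 \<le> 0 \<and> m4 \<ge> 0))))"
proof (intro conjI impI)
  assume "pivot_den x d 2 \<noteq> 0"
  moreover have "x 1 \<le> x 2" "x 2 \<le> x 3" "x 2 \<le> x 4"
    using assms by linarith+
  ultimately show "\<exists>l1 l3 l4. l1 + l3 + l4 = 1
              \<and> pivot_x x d 2 = l1 * x 1 + l3 * x 3 + l4 * x 4
              \<and> pivot_y x y d 2 = l1 * y 1 + l3 * y 3 + l4 * y 4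
              \<and> ((l1 \<ge> 0 \<and> l3 \<le> 0 \<and> l4 \<le> 0) \<or> (l1 \<le> 0 \<and> l3 \<ge> 0 \<and> l4 \<ge> 0))"
    using pivot_as_combination[of x d 2] pivot_weight_signs[of x 2 d]
    by (intro exI[of _ "pivot_weight x d 2 1"] exI[of _ "pivot_weight x d 2 3"]
        exI[of _ "pivot_weight x d 2 4"]) auto
next
  assume "pivot_den x d 3 \<noteq> 0"
  moreover have "x 1 \<le> x 3" "x 2 \<le> x 3" "x 3 \<le> x 4"
    using assms by linarith+
  ultimately show "\<exists>m1 m2 m4. m1 + m2 + m4 = 1
              \<and> pivot_x x d 3 = m1 * x 1 + m2 * x 2 + m4 * x 4
              \<and> pivot_y x y d 3 = m1 * y 1 + m2 * y 2 + m4 * y 4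
              \<and> ((m1 \<ge> 0 \<and> m2 \<ge> 0 \<and> m4 \<le> 0) \<or> (m1 \<le> 0 \<and> m2 \<le> 0 \<and> m4 \<ge> 0))"
    using pivot_as_combination[of x d 3] pivot_weight_signs[of x 3 d]
    by (intro exI[of _ "pivot_weight x d 3 1"] exI[of _ "pivot_weight x d 3 2"]
        exI[of _ "pivot_weight x d 3 4"]) auto
qed

end
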